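(* For each of the following five cases, and for all real parameters $\lambda\neq0$, $\mu\neq0$ and $k$, let $\mathfrak{g}$ be the $8$-dimensional Lie algebra with basis of one-forms $e^1,\dots,e^8$ whose differentials are as listed ($e^{ij}=e^i\wedge e^j$), equipped with the almost parahermitian structure with $V=\mathrm{span}(e_1,\dots,e_4)$, $H=\mathrm{span}(e_5,\dots,e_8)$, $F=\sum_{i=1}^4e^i\wedge e^{4+i}$, $g=\sum_{i=1}^4(e^i\otimes e^{4+i}+e^{4+i}\otimes e^i)$, $K=\mathrm{id}_V-\mathrm{id}_H$; here $\mathfrak{g}$ is isomorphic to $\mathfrak{h}\oplus\mathbb{R}$ with $\mathfrak{h}$ the listed $7$-dimensional nilpotent Lie algebra (given by $(de^1,\dots,de^7)$): (i) $\mathfrak{h}=(0,0,0,e^{12},e^{23}+e^{14},e^{24},e^{15}-e^{34})$; $\mathfrak{g}$: $(0,\,0,\,-\lambda e^{18},\,0,\,-\mu e^{23}+\lambda e^{78},\,\mu e^{13},\,-\mu e^{12}+\lambda\mu e^{38},\,0)$; (ii) $\mathfrak{h}=(0,0,0,e^{12},e^{23}+e^{14},e^{24}+e^{13},-e^{34}+e^{15})$; $\mathfrak{g}$: $(0,\,0,\,-\lambda e^{18},\,0,\,\lambda e^{78}-\mu e^{23},\,-\lambda\mu e^{28}+\mu e^{13},\,\lambda\mu e^{38}-\mu e^{12},\,0)$; (iii) $\mathfrak{h}=(0,0,e^{12},0,e^{24}+e^{13},e^{23},e^{34}+e^{15}+e^{26})$; $\mathfrak{g}$: $(0,\,-\lambda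 e^{18},\,0,\,0,\,\mu e^{23}+e^{17}+\lambda e^{68}-k\lambda e^{18},\,-\mu e^{13}+\lambda\mu e^{28},\,\mu e^{12},\,0)$; (iv) $\mathfrak{h}=(0,0,0,e^{12},e^{23}+e^{14},-e^{24}+e^{13},-e^{34}+e^{15})$; $\mathfrak{g}$: $(0,\,0,\,-\lambda e^{18},\,0,\,-\mu e^{23}+\lambda e^{78},\,\mu e^{13}+\lambda\mu e^{28},\,-\mu e^{12}+\lambda\mu e^{38},\,0)$; (v) $\mathfrak{h}=(0,0,e^{12},0,e^{13}+e^{24},e^{23},-e^{26}+e^{15}+e^{34})$; $\mathfrak{g}$: $(0,\,-\lambda e^{18},\,0,\,0,\,-e^{17}+\mu e^{23}+\lambda e^{68}+k\lambda e^{18},\,\lambda\mu e^{28}-\mu e^{13},\,\mu e^{12},\,0)$. Then in each case the (left-invariant) structure is nearly parak\"ahler, its intrinsic torsion component $\tau_1$ is nonzero, its metric is Ricci-flat, and its curvature is nonzero (not flat).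
   Context: A tuple $(\sigma_1,\dots,\sigma_m)$ describes a Lie algebra with a basis $e^1,\dots,e^m$ of the dual such that $de^i=\sigma_i$, where $d$ is the Chevalley--Eilenberg differential ($d\xi(X,Y)=-\xi([X,Y])$), and $(e_i)$ is the dual basis. The structure is nearly parak\"ahler if $(\nabla_XK)X=0$ for all $X$, where $\nabla$ is the Levi-Civita connection of $g$. The condition $\tau_1\neq0$ means that the $\Lambda^3V^*$-component of the intrinsic torsion is nonzero, equivalently $(dF)^{3,0}\neq0$, where $(dF)^{3,0}$ is the component of $dF$ in $\Lambda^3\mathrm{span}(e^1,\dots,e^4)$. *)

theory Defs
  imports Complex_Main
begin

text \<open>Vectors of the 8-dimensional Lie algebra are functions
  nat => real supported on the indices 1..8 (component i = coefficient of e_i).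
  Two-forms are functions nat => nat => real (w a b = w(e_a,e_b)).
  A Lie algebra is given by the list of differentials [de^1, ..., de^8].\<close>

type_synonym vect = "nat \<Rightarrow> real"
type_synonym form2 = "nat \<Rightarrow> nat \<Rightarrow> real"

definition vecs :: "vect set" where
  "vecs = {X. \<forall>i. i \<notin> {1..8} \<longrightarrow> X i = 0}"

definition bvec :: "nat \<Rightarrow> vect" where
  "bvec i = (\<lambda>j. if j = i then 1 else 0)"

definition vadd :: "vect \<Rightarrow> vect \<Rightarrow> vect" where
  "vadd X Y = (\<lambda>i. X i + Y i)"

definition vsub :: "vect \<Rightarrow> vect \<Rightarrow> vect" where
  "vsub X Y = (\<lambda>i. X i - Y i)"

definition vsc :: "real \<Rightarrow> vect \<Rightarrow> vect" where
  "vsc a X = (\<lambda>i. a * X i)"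

definition ew :: "nat \<Rightarrow> nat \<Rightarrow> form2" where
  "ew i j = (\<lambda>a b. (if a = i \<and> b = j then 1 else 0) - (if a = j \<and> b = i then 1 else 0))"

definition wt :: "real \<Rightarrow> nat \<Rightarrow> nat \<Rightarrow> form2" where
  "wt c i j = (\<lambda>a b. c * ew i j a b)"

definition fsum :: "form2 list \<Rightarrow> form2" where
  "fsum L = (\<lambda>a b. sum_list (map (\<lambda>w. w a b) L))"

definition dif :: "form2 list \<Rightarrow> nat \<Rightarrow> form2" where
  "dif L k = (if 1 \<le> k \<and> k \<le> length L then L ! (k - 1) else (\<lambda>a b. 0))"

text \<open>Bracket determined by d xi (X,Y) = - xi([X,Y]).\<close>
definition br :: "form2 list \<Rightarrow> vect \<Rightarrow> vect \<Rightarrow> vect" where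
  "br L X Y = (\<lambda>k. - (\<Sum>a\<in>{1..8}. \<Sum>b\<in>{1..8}. X a * Y b * dif L k a b))"

definition lie_algebra :: "form2 list \<Rightarrow> bool" where
  "lie_algebra L \<longleftrightarrow> length L = 8 \<and>
     (\<forall>X\<in>vecs. \<forall>Y\<in>vecs. br L X Y = vsc (-1) (br L Y X)) \<and>
     (\<forall>X\<in>vecs. \<forall>Y\<in>vecs. \<forall>Z\<in>vecs.
        vadd (br L X (br L Y Z)) (vadd (br L Y (br L Z X)) (br L Z (br L X Y))) = (\<lambda>i. 0))"

definition lie_iso :: "form2 list \<Rightarrow> form2 list \<Rightarrow> bool" where
  "lie_iso L1 L2 \<longleftrightarrow> (\<exists>f. bij_betw f vecs vecs \<and>
     (\<forall>X\<in>vecs. \<forall>Y\<in>vecs. \<forall>a b. f (vadd (vsc a X) (vsc b Y)) = vadd (vsc a (f X)) (vsc b (f Y))) \<and>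
     (\<forall>X\<in>vecs. \<forall>Y\<in>vecs. f (br L1 X Y) = br L2 (f X) (f Y)))"

definition gm :: "vect \<Rightarrow> vect \<Rightarrow> real" where
  "gm X Y = (\<Sum>i\<in>{1..4}. X i * Y (i + 4) + X (i + 4) * Y i)"

definition Kop :: "vect \<Rightarrow> vect" where
  "Kop X = (\<lambda>i. if i \<in> {1..4} then X i else if i \<in> {5..8} then - X i else 0)"

definition Fm :: "vect \<Rightarrow> vect \<Rightarrow> real" where
  "Fm X Y = (\<Sum>i\<in>{1..4}. X i * Y (i + 4) - X (i + 4) * Y i)"

text \<open>Levi-Civita connection of the left-invariant metric, as a bilinear map on the
  Lie algebra (extended by 0 outside vecs): torsion-free and metric.\<close>
definition is_LC :: "form2 list \<Rightarrow> (vect \<Rightarrow> vect \<Rightarrow> vect) \<Rightarrow> bool" where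
  "is_LC L N \<longleftrightarrow>
     (\<forall>X Y. N X Y \<in> vecs) \<and>
     (\<forall>X Y. X \<notin> vecs \<or> Y \<notin> vecs \<longrightarrow> N X Y = (\<lambda>i. 0)) \<and>
     (\<forall>X\<in>vecs. \<forall>Y\<in>vecs. \<forall>Z\<in>vecs. \<forall>a b.
        N (vadd (vsc a X) (vsc b Y)) Z = vadd (vsc a (N X Z)) (vsc b (N Y Z)) \<and>
        N Z (vadd (vsc a X) (vsc b Y)) = vadd (vsc a (N Z X)) (vsc b (N Z Y))) \<and>
     (\<forall>X\<in>vecs. \<forall>Y\<in>vecs. vsub (N X Y) (N Y X) = br L X Y) \<and>
     (\<forall>X\<in>vecs. \<forall>Y\<in>vecs. \<forall>Z\<in>vecs. gm (N X Y) Z + gm Y (N X Z) = 0)"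

definition LC :: "form2 list \<Rightarrow> vect \<Rightarrow> vect \<Rightarrow> vect" where
  "LC L = (THE N. is_LC L N)"

definition curv :: "form2 list \<Rightarrow> vect \<Rightarrow> vect \<Rightarrow> vect \<Rightarrow> vect" where
  "curv L X Y Z = vsub (vsub (LC L X (LC L Y Z)) (LC L Y (LC L X Z))) (LC L (br L X Y) Z)"

definition ricci :: "form2 list \<Rightarrow> vect \<Rightarrow> vect \<Rightarrow> real" where
  "ricci L Y Z = (\<Sum>i\<in>{1..8}. curv L (bvec i) Y Z i)"

definition ricci_flat :: "form2 list \<Rightarrow> bool" where
  "ricci_flat L \<longleftrightarrow> (\<forall>Y\<in>vecs. \<forall>Z\<in>vecs. ricci L Y Z = 0)"

definition flat :: "form2 list \<Rightarrow> bool" where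
  "flat L \<longleftrightarrow> (\<forall>X\<in>vecs. \<forall>Y\<in>vecs. \<forall>Z\<in>vecs. curv L X Y Z = (\<lambda>i. 0))"

text \<open>(nabla_X K) X = nabla_X (K X) - K (nabla_X X).\<close>
definition nearly_parakahler :: "form2 list \<Rightarrow> bool" where
  "nearly_parakahler L \<longleftrightarrow> (\<forall>X\<in>vecs. vsub (LC L X (Kop X)) (Kop (LC L X X)) = (\<lambda>i. 0))"

definition d2 :: "form2 list \<Rightarrow> (vect \<Rightarrow> vect \<Rightarrow> real) \<Rightarrow> vect \<Rightarrow> vect \<Rightarrow> vect \<Rightarrow> real" where
  "d2 L w X Y Z = - w (br L X Y) Z + w (br L X Z) Y - w (br L Y Z) X"

text \<open>tau_1 nonzero iff the component of dF in Lambda^3 span(e^1..e^4) is nonzero.\<close>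
definition tau1_nonzero :: "form2 list \<Rightarrow> bool" where
  "tau1_nonzero L \<longleftrightarrow> (\<exists>i\<in>{1..4}. \<exists>j\<in>{1..4}. \<exists>k\<in>{1..4}. d2 L Fm (bvec i) (bvec j) (bvec k) \<noteq> 0)"

definition z2 :: form2 where "z2 = (\<lambda>a b. 0)"

text \<open>The five Lie algebras g (parameters l = lambda, m = mu, k) and h (+) R
  (h given by de^1..de^7, and de^8 = 0 for the R factor).\<close>
definition g1 :: "real \<Rightarrow> real \<Rightarrow> real \<Rightarrow> form2 list" where
  "g1 l m k = [z2, z2, wt (-l) 1 8, z2, fsum [wt (-m) 2 3, wt l 7 8], wt m 1 3,
               fsum [wt (-m) 1 2, wt (l*m) 3 8], z2]"
definition h1 :: "form2 list" where
  "h1 = [z2, z2, z2, wt 1 1 2, fsum [wt 1 2 3, wt 1 1 4], wt 1 2 4,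
         fsum [wt 1 1 5, wt (-1) 3 4], z2]"

definition g2 :: "real \<Rightarrow> real \<Rightarrow> real \<Rightarrow> form2 list" where
  "g2 l m k = [z2, z2, wt (-l) 1 8, z2, fsum [wt l 7 8, wt (-m) 2 3],
               fsum [wt (-l*m) 2 8, wt m 1 3], fsum [wt (l*m) 3 8, wt (-m) 1 2], z2]"
definition h2 :: "form2 list" where
  "h2 = [z2, z2, z2, wt 1 1 2, fsum [wt 1 2 3, wt 1 1 4], fsum [wt 1 2 4, wt 1 1 3],
         fsum [wt (-1) 3 4, wt 1 1 5], z2]"

definition g3 :: "real \<Rightarrow> real \<Rightarrow> real \<Rightarrow> form2 list" where
  "g3 l m k = [z2, wt (-l) 1 8, z2, z2,
               fsum [wt m 2 3, wt 1 1 7, wt l 6 8, wt (-k*l) 1 8],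
               fsum [wt (-m) 1 3, wt (l*m) 2 8], wt m 1 2, z2]"
definition h3 :: "form2 list" where
  "h3 = [z2, z2, wt 1 1 2, z2, fsum [wt 1 2 4, wt 1 1 3], wt 1 2 3,
         fsum [wt 1 3 4, wt 1 1 5, wt 1 2 6], z2]"

definition g4 :: "real \<Rightarrow> real \<Rightarrow> real \<Rightarrow> form2 list" where
  "g4 l m k = [z2, z2, wt (-l) 1 8, z2, fsum [wt (-m) 2 3, wt l 7 8],
               fsum [wt m 1 3, wt (l*m) 2 8], fsum [wt (-m) 1 2, wt (l*m) 3 8], z2]"
definition h4 :: "form2 list" where
  "h4 = [z2, z2, z2, wt 1 1 2, fsum [wt 1 2 3, wt 1 1 4], fsum [wt (-1) 2 4, wt 1 1 3],
         fsum [wt (-1) 3 4, wt 1 1 5], z2]"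

definition g5 :: "real \<Rightarrow> real \<Rightarrow> real \<Rightarrow> form2 list" where
  "g5 l m k = [z2, wt (-l) 1 8, z2, z2,
               fsum [wt (-1) 1 7, wt m 2 3, wt l 6 8, wt (k*l) 1 8],
               fsum [wt (l*m) 2 8, wt (-m) 1 3], wt m 1 2, z2]"
definition h5 :: "form2 list" where
  "h5 = [z2, z2, wt 1 1 2, z2, fsum [wt 1 1 3, wt 1 2 4], wt 1 2 3,
         fsum [wt (-1) 2 6, wt 1 1 5, wt 1 3 4], z2]"

definition claim :: "form2 list \<Rightarrow> form2 list \<Rightarrow> bool" where
  "claim G H \<longleftrightarrow> lie_algebra G \<and> lie_algebra H \<and> lie_iso G H \<and>
     nearly_parakahler G \<and> tau1_nonzero G \<and> ricci_flat G \<and> \<not> flat G"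

end

theory Submission
  imports Defs
begin

(* All five structures are checked by direct computation in the basis e_1, ..., e_8.  The Levi-Civita connection is
   written down explicitly and identified with LC by the Koszul uniqueness argument: the
   difference of two metric torsion-free connections, paired with the metric, is
   symmetric in its first two arguments and skew in its last two, hence zero.  Being
   nearly parakaehler, Ricci-flatness, a nonzero component dF(e_1,e_2,e_3) and a nonzero
   curvature component R(e_1,e_8)e_j are then polynomial identities in lambda, mu and k,
   and g is isomorphic to h + R by an explicit change of basis that is invertible
   because lambda mu is nonzero. *)

section \<open>Coordinates\<close>

definition v8 :: "real \<Rightarrow> real \<Rightarrow> real \<Rightarrow> real \<Rightarrow> real \<Rightarrow> real \<Rightarrow> real \<Rightarrow> real \<Rightarrow> vect" where
  "v8 a1 a2 a3 a4 a5 a6 a7 a8 = (\<lambda>i. if i = 1 then a1 else if i = 2 then a2 else if i = 3 then a3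
     else if i = 4 then a4 else if i = 5 then a5 else if i = 6 then a6 else if i = 7 then a7
     else if i = 8 then a8 else 0)"

lemma v8_apply [simp]:
  "v8 a1 a2 a3 a4 a5 a6 a7 a8 0 = 0"
  "v8 a1 a2 a3 a4 a5 a6 a7 a8 (Suc 0) = a1"
  "v8 a1 a2 a3 a4 a5 a6 a7 a8 1 = a1"
  "v8 a1 a2 a3 a4 a5 a6 a7 a8 2 = a2"
  "v8 a1 a2 a3 a4 a5 a6 a7 a8 3 = a3"
  "v8 a1 a2 a3 a4 a5 a6 a7 a8 4 = a4"
  "v8 a1 a2 a3 a4 a5 a6 a7 a8 5 = a5"
  "v8 a1 a2 a3 a4 a5 a6 a7 a8 6 = a6"
  "v8 a1 a2 a3 a4 a5 a6 a7 a8 7 = a7"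
  "v8 a1 a2 a3 a4 a5 a6 a7 a8 8 = a8"
  by (simp_all add: v8_def)

lemma atLeastAtMost_1_8_iff:
  "i \<in> {1..8::nat} \<longleftrightarrow> i = 1 \<or> i = 2 \<or> i = 3 \<or> i = 4 \<or> i = 5 \<or> i = 6 \<or> i = 7 \<or> i = 8"
  by auto

lemma v8_in_vecs [simp]: "v8 a1 a2 a3 a4 a5 a6 a7 a8 \<in> vecs"
  by (simp add: vecs_def v8_def)

lemma vecs_eq_v8: "X \<in> vecs \<Longrightarrow> X = v8 (X 1) (X 2) (X 3) (X 4) (X 5) (X 6) (X 7) (X 8)"
  unfolding vecs_def v8_def by (rule ext) (auto simp: atLeastAtMost_1_8_iff)

lemma v8_eq_iff [simp]:
  "v8 a1 a2 a3 a4 a5 a6 a7 a8 = v8 b1 b2 b3 b4 b5 b6 b7 b8 \<longleftrightarrow>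
   a1 = b1 \<and> a2 = b2 \<and> a3 = b3 \<and> a4 = b4 \<and> a5 = b5 \<and> a6 = b6 \<and> a7 = b7 \<and> a8 = b8"
proof
  assume h: "v8 a1 a2 a3 a4 a5 a6 a7 a8 = v8 b1 b2 b3 b4 b5 b6 b7 b8"
  show "a1 = b1 \<and> a2 = b2 \<and> a3 = b3 \<and> a4 = b4 \<and> a5 = b5 \<and> a6 = b6 \<and> a7 = b7 \<and> a8 = b8"
    using fun_cong[OF h, of 1] fun_cong[OF h, of 2] fun_cong[OF h, of 3] fun_cong[OF h, of 4]
      fun_cong[OF h, of 5] fun_cong[OF h, of 6] fun_cong[OF h, of 7] fun_cong[OF h, of 8]
    by (simp only: v8_apply)
qed simp

lemma zero_eq_v8: "(\<lambda>i. 0::real) = v8 0 0 0 0 0 0 0 0"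
  by (simp add: fun_eq_iff v8_def)

lemma ball_vecs: "(\<forall>X\<in>vecs. P X) \<longleftrightarrow> (\<forall>a1 a2 a3 a4 a5 a6 a7 a8. P (v8 a1 a2 a3 a4 a5 a6 a7 a8))"
proof
  assume "\<forall>a1 a2 a3 a4 a5 a6 a7 a8. P (v8 a1 a2 a3 a4 a5 a6 a7 a8)"
  then show "\<forall>X\<in>vecs. P X" by (metis vecs_eq_v8)
qed simp

lemma vadd_v8 [simp]: "vadd (v8 a1 a2 a3 a4 a5 a6 a7 a8) (v8 b1 b2 b3 b4 b5 b6 b7 b8) =
   v8 (a1+b1) (a2+b2) (a3+b3) (a4+b4) (a5+b5) (a6+b6) (a7+b7) (a8+b8)"
  by (simp add: fun_eq_iff vadd_def v8_def)

lemma vsub_v8 [simp]: "vsub (v8 a1 a2 a3 a4 a5 a6 a7 a8) (v8 b1 b2 b3 b4 b5 b6 b7 b8) =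
   v8 (a1-b1) (a2-b2) (a3-b3) (a4-b4) (a5-b5) (a6-b6) (a7-b7) (a8-b8)"
  by (simp add: fun_eq_iff vsub_def v8_def)

lemma vsc_v8 [simp]: "vsc c (v8 a1 a2 a3 a4 a5 a6 a7 a8) =
   v8 (c*a1) (c*a2) (c*a3) (c*a4) (c*a5) (c*a6) (c*a7) (c*a8)"
  by (simp add: fun_eq_iff vsc_def v8_def)

lemma Kop_v8 [simp]: "Kop (v8 a1 a2 a3 a4 a5 a6 a7 a8) = v8 a1 a2 a3 a4 (-a5) (-a6) (-a7) (-a8)"
  by (simp add: fun_eq_iff Kop_def v8_def)

lemma bvec_eq_v8 [simp]:
  "bvec 1 = v8 1 0 0 0 0 0 0 0" "bvec (Suc 0) = v8 1 0 0 0 0 0 0 0" "bvec 2 = v8 0 1 0 0 0 0 0 0"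
  "bvec 3 = v8 0 0 1 0 0 0 0 0" "bvec 4 = v8 0 0 0 1 0 0 0 0" "bvec 5 = v8 0 0 0 0 1 0 0 0"
  "bvec 6 = v8 0 0 0 0 0 1 0 0" "bvec 7 = v8 0 0 0 0 0 0 1 0" "bvec 8 = v8 0 0 0 0 0 0 0 1"
  by (simp_all add: fun_eq_iff bvec_def v8_def)

lemma sum_atLeastAtMost_1_4: "(\<Sum>i\<in>{1..4::nat}. f i) = f 1 + f 2 + f 3 + f 4"
  by (simp add: numeral_eq_Suc)

(* Used by unfolding before simp: simp rewrites the bound 1 to Suc 0, after which this
   expansion no longer matches. *)
lemma sum_atLeastAtMost_1_8:
  "(\<Sum>i\<in>{1..8::nat}. f i) = f 1 + f 2 + f 3 + f 4 + f 5 + f 6 + f 7 + f 8"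
  by (simp add: numeral_eq_Suc)

lemma gm_v8 [simp]: "gm (v8 a1 a2 a3 a4 a5 a6 a7 a8) (v8 b1 b2 b3 b4 b5 b6 b7 b8) =
   a1*b5 + a5*b1 + a2*b6 + a6*b2 + a3*b7 + a7*b3 + a4*b8 + a8*b4"
  unfolding gm_def sum_atLeastAtMost_1_4 by simp

lemma Fm_v8 [simp]: "Fm (v8 a1 a2 a3 a4 a5 a6 a7 a8) (v8 b1 b2 b3 b4 b5 b6 b7 b8) =
   a1*b5 - a5*b1 + a2*b6 - a6*b2 + a3*b7 - a7*b3 + a4*b8 - a8*b4"
  unfolding Fm_def sum_atLeastAtMost_1_4 by simp

lemma br_eq_v8:
  assumes "length L = 8"
  shows "br L X Y = v8 (br L X Y 1) (br L X Y 2) (br L X Y 3) (br L X Y 4)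
                       (br L X Y 5) (br L X Y 6) (br L X Y 7) (br L X Y 8)"
proof (rule vecs_eq_v8)
  show "br L X Y \<in> vecs" using assms by (simp add: vecs_def br_def dif_def)
qed

lemma bvec_in_vecs: "i \<in> {1..8} \<Longrightarrow> bvec i \<in> vecs"
  by (simp add: vecs_def bvec_def)

lemma zero_in_vecs: "(\<lambda>i. 0) \<in> vecs"
  by (simp add: vecs_def)

lemma vecs_vsub: "X \<in> vecs \<Longrightarrow> Y \<in> vecs \<Longrightarrow> vsub X Y \<in> vecs"
  by (simp add: vecs_def vsub_def)

lemma vecs_lincomb: "X \<in> vecs \<Longrightarrow> Y \<in> vecs \<Longrightarrow> vadd (vsc a X) (vsc b Y) \<in> vecs"
  by (simp add: vecs_def vadd_def vsc_def)

section \<open>Uniqueness of the Levi-Civita connection\<close>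

lemma gm_commute: "gm X Y = gm Y X"
  unfolding gm_def by (rule sum.cong[OF refl]) (simp add: mult.commute add.commute)

lemma gm_vsub_left: "gm (vsub A B) Z = gm A Z - gm B Z"
  unfolding gm_def vsub_def sum_subtractf[symmetric] by (rule sum.cong[OF refl]) (simp add: algebra_simps)

lemma gm_bvec_dual: "i \<in> {1..8} \<Longrightarrow> gm W (bvec (if i \<le> 4 then i + 4 else i - 4)) = W i"
  unfolding atLeastAtMost_1_8_iff gm_def sum_atLeastAtMost_1_4 bvec_def by (elim disjE) simp_all

lemma gm_nondegenerate:
  assumes "W \<in> vecs" and "\<And>Z. Z \<in> vecs \<Longrightarrow> gm W Z = 0"
  shows "W = (\<lambda>i. 0)"
proof
  fix i
  show "W i = 0"
  proof (cases "i \<in> {1..8}")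
    case True
    then have "bvec (if i \<le> 4 then i + 4 else i - 4) \<in> vecs"
      by (intro bvec_in_vecs) auto
    then show ?thesis using gm_bvec_dual[OF True] assms(2) by metis
  next
    case False
    then show ?thesis using assms(1) by (simp add: vecs_def)
  qed
qed

lemma sym_skew_eq_0:
  fixes D :: "'a \<Rightarrow> 'a \<Rightarrow> 'a \<Rightarrow> real"
  assumes sym: "\<And>X Y Z. X \<in> A \<Longrightarrow> Y \<in> A \<Longrightarrow> Z \<in> A \<Longrightarrow> D X Y Z = D Y X Z"
    and skew: "\<And>X Y Z. X \<in> A \<Longrightarrow> Y \<in> A \<Longrightarrow> Z \<in> A \<Longrightarrow> D X Y Z = - D X Z Y"
    and XYZ: "X \<in> A" "Y \<in> A" "Z \<in> A"
  shows "D X Y Z = 0"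
proof -
  have "D X Y Z = D Y X Z" using sym[of X Y Z] XYZ by simp
  also have "\<dots> = - D Y Z X" using skew[of Y X Z] XYZ by simp
  also have "\<dots> = - D Z Y X" using sym[of Y Z X] XYZ by simp
  also have "\<dots> = D Z X Y" using skew[of Z Y X] XYZ by simp
  also have "\<dots> = D X Z Y" using sym[of Z X Y] XYZ by simp
  also have "\<dots> = - D X Y Z" using skew[of X Z Y] XYZ by simp
  finally show ?thesis by simp
qed

lemma is_LC_in_vecs: "is_LC L N \<Longrightarrow> N X Y \<in> vecs"
  unfolding is_LC_def by (elim conjE) simp

lemma is_LC_outside_vecs: "is_LC L N \<Longrightarrow> \<not> (X \<in> vecs \<and> Y \<in> vecs) \<Longrightarrow> N X Y = (\<lambda>i. 0)"
  unfolding is_LC_def by (elim conjE) simp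

lemma is_LC_torsion_free:
  "is_LC L N \<Longrightarrow> X \<in> vecs \<Longrightarrow> Y \<in> vecs \<Longrightarrow> vsub (N X Y) (N Y X) = br L X Y"
  unfolding is_LC_def by (elim conjE) simp

lemma is_LC_metric:
  assumes "is_LC L N" "X \<in> vecs" "Y \<in> vecs" "Z \<in> vecs"
  shows "gm (N X Y) Z = - gm (N X Z) Y"
proof -
  have "gm (N X Y) Z + gm Y (N X Z) = 0"
    using assms unfolding is_LC_def by (elim conjE) simp
  then show ?thesis by (simp add: gm_commute[of Y] eq_neg_iff_add_eq_0)
qed

lemma is_LC_unique:
  assumes N1: "is_LC L N1" and N2: "is_LC L N2"
  shows "N1 = N2"
proof (rule ext, rule ext)
  fix X Y
  show "N1 X Y = N2 X Y"
  proof (cases "X \<in> vecs \<and> Y \<in> vecs")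
    case False
    then show ?thesis using is_LC_outside_vecs[OF N1] is_LC_outside_vecs[OF N2] by simp
  next
    case True
    define D where "D X Y Z = gm (vsub (N1 X Y) (N2 X Y)) Z" for X Y Z
    have sym: "D X Y Z = D Y X Z" if "X \<in> vecs" "Y \<in> vecs" for X Y Z
    proof -
      have "vsub (N1 X Y) (N1 Y X) = vsub (N2 X Y) (N2 Y X)"
        using is_LC_torsion_free[OF N1 that] is_LC_torsion_free[OF N2 that] by simp
      then have torsion: "N1 X Y i - N1 Y X i = N2 X Y i - N2 Y X i" for i
        unfolding vsub_def by (rule fun_cong)
      have "vsub (N1 X Y) (N2 X Y) = vsub (N1 Y X) (N2 Y X)"
      proof
        fix i
        show "vsub (N1 X Y) (N2 X Y) i = vsub (N1 Y X) (N2 Y X) i"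
          using torsion[of i] unfolding vsub_def by linarith
      qed
      then show ?thesis unfolding D_def by simp
    qed
    have skew: "D X Y Z = - D X Z Y" if "X \<in> vecs" "Y \<in> vecs" "Z \<in> vecs" for X Y Z
      unfolding D_def gm_vsub_left using is_LC_metric[OF N1 that] is_LC_metric[OF N2 that] by simp
    have "vsub (N1 X Y) (N2 X Y) = (\<lambda>i. 0)"
    proof (rule gm_nondegenerate)
      show "vsub (N1 X Y) (N2 X Y) \<in> vecs"
        using is_LC_in_vecs[OF N1] is_LC_in_vecs[OF N2] by (rule vecs_vsub)
      show "gm (vsub (N1 X Y) (N2 X Y)) Z = 0" if "Z \<in> vecs" for Z
        using sym_skew_eq_0[of vecs D X Y Z, OF sym skew] True that unfolding D_def by simp
    qed
    then show ?thesis by (simp add: fun_eq_iff vsub_def)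
  qed
qed

lemma LC_eqI: "is_LC L N \<Longrightarrow> LC L = N"
  unfolding LC_def using is_LC_unique by blast

definition vecs_restrict :: "(vect \<Rightarrow> vect \<Rightarrow> vect) \<Rightarrow> vect \<Rightarrow> vect \<Rightarrow> vect" where
  "vecs_restrict B X Y = (if X \<in> vecs \<and> Y \<in> vecs then B X Y else (\<lambda>i. 0))"

lemma vecs_restrict_v8 [simp]:
  "vecs_restrict B (v8 x1 x2 x3 x4 x5 x6 x7 x8) (v8 y1 y2 y3 y4 y5 y6 y7 y8) =
   B (v8 x1 x2 x3 x4 x5 x6 x7 x8) (v8 y1 y2 y3 y4 y5 y6 y7 y8)"
  by (simp add: vecs_restrict_def)

lemma is_LC_vecs_restrictI:
  assumes "\<forall>X\<in>vecs. \<forall>Y\<in>vecs. B X Y \<in> vecs"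
    and "\<forall>X\<in>vecs. \<forall>Y\<in>vecs. \<forall>Z\<in>vecs. \<forall>a b.
           B (vadd (vsc a X) (vsc b Y)) Z = vadd (vsc a (B X Z)) (vsc b (B Y Z)) \<and>
           B Z (vadd (vsc a X) (vsc b Y)) = vadd (vsc a (B Z X)) (vsc b (B Z Y))"
    and "\<forall>X\<in>vecs. \<forall>Y\<in>vecs. vsub (B X Y) (B Y X) = br L X Y"
    and "\<forall>X\<in>vecs. \<forall>Y\<in>vecs. \<forall>Z\<in>vecs. gm (B X Y) Z + gm Y (B X Z) = 0"
  shows "is_LC L (vecs_restrict B)"
  using assms unfolding is_LC_def vecs_restrict_def by (simp add: vecs_lincomb zero_in_vecs)


section \<open>The five structures\<close>

lemma lie_isoI:
  assumes "\<forall>X\<in>vecs. f X \<in> vecs" and "\<forall>Y\<in>vecs. f' Y \<in> vecs"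
    and "\<forall>X\<in>vecs. f' (f X) = X" and "\<forall>Y\<in>vecs. f (f' Y) = Y"
    and "\<forall>X\<in>vecs. \<forall>Y\<in>vecs. \<forall>a b. f (vadd (vsc a X) (vsc b Y)) = vadd (vsc a (f X)) (vsc b (f Y))"
    and "\<forall>X\<in>vecs. \<forall>Y\<in>vecs. f (br L1 X Y) = br L2 (f X) (f Y)"
  shows "lie_iso L1 L2"
  unfolding lie_iso_def using assms
  by (intro exI[of _ f] conjI bij_betw_byWitness[of vecs f']) auto

lemma tau1_nonzeroI:
  assumes "i \<in> {1..4}" "j \<in> {1..4}" "k \<in> {1..4}" "d2 L Fm (bvec i) (bvec j) (bvec k) \<noteq> 0"
  shows "tau1_nonzero L"
  using assms unfolding tau1_nonzero_def by blast

lemma not_flatI: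
  assumes "X \<in> vecs" "Y \<in> vecs" "Z \<in> vecs" "curv L X Y Z i \<noteq> 0"
  shows "\<not> flat L"
proof
  assume "flat L"
  then have "curv L X Y Z = (\<lambda>i. 0)" using assms(1-3) unfolding flat_def by blast
  then show False using assms(4) by simp
qed


lemma br_h1:
  "br h1 (v8 x1 x2 x3 x4 x5 x6 x7 x8) (v8 y1 y2 y3 y4 y5 y6 y7 y8) =
   v8 0 0 0
      (- (x1 * y2 - x2 * y1))
      (- (x1 * y4 - x4 * y1) - (x2 * y3 - x3 * y2))
      (- (x2 * y4 - x4 * y2))
      (- (x1 * y5 - x5 * y1) + (x3 * y4 - x4 * y3))
      0"
  by (rule br_eq_v8[THEN trans])
    (simp add: h1_def, unfold br_def sum_atLeastAtMost_1_8,
     simp add: dif_def h1_def fsum_def wt_def ew_def z2_def algebra_simps)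

lemma br_g1:
  "br (g1 l m k) (v8 x1 x2 x3 x4 x5 x6 x7 x8) (v8 y1 y2 y3 y4 y5 y6 y7 y8) =
   v8 0 0
      (l * (x1 * y8 - x8 * y1))
      0
      (- l * (x7 * y8 - x8 * y7) + m * (x2 * y3 - x3 * y2))
      (- m * (x1 * y3 - x3 * y1))
      (- l * m * (x3 * y8 - x8 * y3) + m * (x1 * y2 - x2 * y1))
      0"
  by (rule br_eq_v8[THEN trans])
    (simp add: g1_def, unfold br_def sum_atLeastAtMost_1_8,
     simp add: dif_def g1_def fsum_def wt_def ew_def z2_def algebra_simps)

lemma LC_g1:
  "LC (g1 l m k) = vecs_restrict (\<lambda>X Y.
      v8 0 0
         (- l * X 8 * Y 1)
         (l * m * X 3 * Y 3)
         (l * X 8 * Y 7 + m / 2 * (X 2 * Y 3 - X 3 * Y 2))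
         (- m / 2 * (X 1 * Y 3 - X 3 * Y 1))
         (- l * m * X 3 * Y 8 + m / 2 * (X 1 * Y 2 - X 2 * Y 1))
         0)"
  by (rule LC_eqI, rule is_LC_vecs_restrictI) (simp_all add: ball_vecs br_g1 algebra_simps field_simps)

lemma claim_g1_h1:
  assumes "l \<noteq> 0" "m \<noteq> 0"
  shows "claim (g1 l m k) h1"
  unfolding claim_def
proof (intro conjI)
  show "lie_algebra (g1 l m k)"
    unfolding lie_algebra_def ball_vecs br_g1 by (simp add: g1_def zero_eq_v8 algebra_simps)
  show "lie_algebra h1"
    unfolding lie_algebra_def ball_vecs br_h1 by (simp add: h1_def zero_eq_v8 algebra_simps)
  show "lie_iso (g1 l m k) h1"
    by (rule lie_isoI[where f = "\<lambda>X. v8 (l * X 8) (X 1) (X 2) (X 3) (- X 7 / m) (X 6 / m) (X 5 / m) (X 4)"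
                        and f' = "\<lambda>Y. v8 (Y 2) (Y 3) (Y 4) (Y 8) (m * Y 7) (m * Y 6) (- m * Y 5) (Y 1 / l)"])
      (simp_all add: ball_vecs br_g1 br_h1 assms field_simps)
  show "nearly_parakahler (g1 l m k)"
    unfolding nearly_parakahler_def LC_g1 ball_vecs by (simp add: zero_eq_v8 algebra_simps)
  show "tau1_nonzero (g1 l m k)"
    by (rule tau1_nonzeroI[of 1 2 3]) (simp_all add: d2_def br_g1 assms)
  show "ricci_flat (g1 l m k)"
    unfolding ricci_flat_def ricci_def curv_def LC_g1 ball_vecs sum_atLeastAtMost_1_8
    by (simp add: br_g1 algebra_simps)
  show "\<not> flat (g1 l m k)"
    by (rule not_flatI[of "bvec 1" "bvec 8" "bvec 3" _ 4]) (simp_all add: curv_def LC_g1 br_g1 assms)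
qed


lemma br_h2:
  "br h2 (v8 x1 x2 x3 x4 x5 x6 x7 x8) (v8 y1 y2 y3 y4 y5 y6 y7 y8) =
   v8 0 0 0
      (- (x1 * y2 - x2 * y1))
      (- (x1 * y4 - x4 * y1) - (x2 * y3 - x3 * y2))
      (- (x1 * y3 - x3 * y1) - (x2 * y4 - x4 * y2))
      (- (x1 * y5 - x5 * y1) + (x3 * y4 - x4 * y3))
      0"
  by (rule br_eq_v8[THEN trans])
    (simp add: h2_def, unfold br_def sum_atLeastAtMost_1_8,
     simp add: dif_def h2_def fsum_def wt_def ew_def z2_def algebra_simps)

lemma br_g2:
  "br (g2 l m k) (v8 x1 x2 x3 x4 x5 x6 x7 x8) (v8 y1 y2 y3 y4 y5 y6 y7 y8) =
   v8 0 0
      (l * (x1 * y8 - x8 * y1))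
      0
      (- l * (x7 * y8 - x8 * y7) + m * (x2 * y3 - x3 * y2))
      (l * m * (x2 * y8 - x8 * y2) - m * (x1 * y3 - x3 * y1))
      (- l * m * (x3 * y8 - x8 * y3) + m * (x1 * y2 - x2 * y1))
      0"
  by (rule br_eq_v8[THEN trans])
    (simp add: g2_def, unfold br_def sum_atLeastAtMost_1_8,
     simp add: dif_def g2_def fsum_def wt_def ew_def z2_def algebra_simps)

lemma LC_g2:
  "LC (g2 l m k) = vecs_restrict (\<lambda>X Y.
      v8 0 0
         (- l * X 8 * Y 1)
         (- l * m * X 2 * Y 2 + l * m * X 3 * Y 3)
         (l * X 8 * Y 7 + m / 2 * (X 2 * Y 3 - X 3 * Y 2))
         (l * m * X 2 * Y 8 - m / 2 * (X 1 * Y 3 - X 3 * Y 1))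
         (- l * m * X 3 * Y 8 + m / 2 * (X 1 * Y 2 - X 2 * Y 1))
         0)"
  by (rule LC_eqI, rule is_LC_vecs_restrictI) (simp_all add: ball_vecs br_g2 algebra_simps field_simps)

lemma claim_g2_h2:
  assumes "l \<noteq> 0" "m \<noteq> 0"
  shows "claim (g2 l m k) h2"
  unfolding claim_def
proof (intro conjI)
  show "lie_algebra (g2 l m k)"
    unfolding lie_algebra_def ball_vecs br_g2 by (simp add: g2_def zero_eq_v8 algebra_simps)
  show "lie_algebra h2"
    unfolding lie_algebra_def ball_vecs br_h2 by (simp add: h2_def zero_eq_v8 algebra_simps)
  show "lie_iso (g2 l m k) h2"
    by (rule lie_isoI[where f = "\<lambda>X. v8 (l * X 8) (X 1) (X 2) (X 3) (- X 7 / m) (X 6 / m) (X 5 / m) (X 4)"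
                        and f' = "\<lambda>Y. v8 (Y 2) (Y 3) (Y 4) (Y 8) (m * Y 7) (m * Y 6) (- m * Y 5) (Y 1 / l)"])
      (simp_all add: ball_vecs br_g2 br_h2 assms field_simps)
  show "nearly_parakahler (g2 l m k)"
    unfolding nearly_parakahler_def LC_g2 ball_vecs by (simp add: zero_eq_v8 algebra_simps)
  show "tau1_nonzero (g2 l m k)"
    by (rule tau1_nonzeroI[of 1 2 3]) (simp_all add: d2_def br_g2 assms)
  show "ricci_flat (g2 l m k)"
    unfolding ricci_flat_def ricci_def curv_def LC_g2 ball_vecs sum_atLeastAtMost_1_8
    by (simp add: br_g2 algebra_simps)
  show "\<not> flat (g2 l m k)"
    by (rule not_flatI[of "bvec 1" "bvec 8" "bvec 3" _ 4]) (simp_all add: curv_def LC_g2 br_g2 assms)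
qed


lemma br_h3:
  "br h3 (v8 x1 x2 x3 x4 x5 x6 x7 x8) (v8 y1 y2 y3 y4 y5 y6 y7 y8) =
   v8 0 0
      (- (x1 * y2 - x2 * y1))
      0
      (- (x1 * y3 - x3 * y1) - (x2 * y4 - x4 * y2))
      (- (x2 * y3 - x3 * y2))
      (- (x1 * y5 - x5 * y1) - (x2 * y6 - x6 * y2) - (x3 * y4 - x4 * y3))
      0"
  by (rule br_eq_v8[THEN trans])
    (simp add: h3_def, unfold br_def sum_atLeastAtMost_1_8,
     simp add: dif_def h3_def fsum_def wt_def ew_def z2_def algebra_simps)

lemma br_g3:
  "br (g3 l m k) (v8 x1 x2 x3 x4 x5 x6 x7 x8) (v8 y1 y2 y3 y4 y5 y6 y7 y8) =
   v8 0
      (l * (x1 * y8 - x8 * y1))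
      0 0
      (k * l * (x1 * y8 - x8 * y1) - l * (x6 * y8 - x8 * y6) - m * (x2 * y3 - x3 * y2) - (x1 * y7 - x7 * y1))
      (- l * m * (x2 * y8 - x8 * y2) + m * (x1 * y3 - x3 * y1))
      (- m * (x1 * y2 - x2 * y1))
      0"
  by (rule br_eq_v8[THEN trans])
    (simp add: g3_def, unfold br_def sum_atLeastAtMost_1_8,
     simp add: dif_def g3_def fsum_def wt_def ew_def z2_def algebra_simps)

lemma LC_g3:
  "LC (g3 l m k) = vecs_restrict (\<lambda>X Y.
      v8 0
         (- l * X 8 * Y 1)
         (X 1 * Y 1)
         (- k * l * X 1 * Y 1 + l * m * X 2 * Y 2)
         (k * l * X 1 * Y 8 + l * X 8 * Y 6 - m / 2 * (X 2 * Y 3 - X 3 * Y 2) - X 1 * Y 7)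
         (- l * m * X 2 * Y 8 + m / 2 * (X 1 * Y 3 - X 3 * Y 1))
         (- m / 2 * (X 1 * Y 2 - X 2 * Y 1))
         0)"
  by (rule LC_eqI, rule is_LC_vecs_restrictI) (simp_all add: ball_vecs br_g3 algebra_simps field_simps)

lemma claim_g3_h3:
  assumes "l \<noteq> 0" "m \<noteq> 0"
  shows "claim (g3 l m k) h3"
  unfolding claim_def
proof (intro conjI)
  show "lie_algebra (g3 l m k)"
    unfolding lie_algebra_def ball_vecs br_g3 by (simp add: g3_def zero_eq_v8 algebra_simps)
  show "lie_algebra h3"
    unfolding lie_algebra_def ball_vecs br_h3 by (simp add: h3_def zero_eq_v8 algebra_simps)
  show "lie_iso (g3 l m k) h3"
    by (rule lie_isoI[where f = "\<lambda>X. v8 (l * X 8) (X 1) (X 2) (X 3) (- X 6 / m) (X 7 / m) ((X 5 - k * X 2) / m) (X 4)"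
                        and f' = "\<lambda>Y. v8 (Y 2) (Y 3) (Y 4) (Y 8) (m * Y 7 + k * Y 3) (- m * Y 5) (m * Y 6) (Y 1 / l)"])
      (simp_all add: ball_vecs br_g3 br_h3 assms field_simps)
  show "nearly_parakahler (g3 l m k)"
    unfolding nearly_parakahler_def LC_g3 ball_vecs by (simp add: zero_eq_v8 algebra_simps)
  show "tau1_nonzero (g3 l m k)"
    by (rule tau1_nonzeroI[of 1 2 3]) (simp_all add: d2_def br_g3 assms)
  show "ricci_flat (g3 l m k)"
    unfolding ricci_flat_def ricci_def curv_def LC_g3 ball_vecs sum_atLeastAtMost_1_8
    by (simp add: br_g3 algebra_simps)
  show "\<not> flat (g3 l m k)"
    by (rule not_flatI[of "bvec 1" "bvec 8" "bvec 2" _ 4]) (simp_all add: curv_def LC_g3 br_g3 assms)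
qed


lemma br_h4:
  "br h4 (v8 x1 x2 x3 x4 x5 x6 x7 x8) (v8 y1 y2 y3 y4 y5 y6 y7 y8) =
   v8 0 0 0
      (- (x1 * y2 - x2 * y1))
      (- (x1 * y4 - x4 * y1) - (x2 * y3 - x3 * y2))
      (- (x1 * y3 - x3 * y1) + (x2 * y4 - x4 * y2))
      (- (x1 * y5 - x5 * y1) + (x3 * y4 - x4 * y3))
      0"
  by (rule br_eq_v8[THEN trans])
    (simp add: h4_def, unfold br_def sum_atLeastAtMost_1_8,
     simp add: dif_def h4_def fsum_def wt_def ew_def z2_def algebra_simps)

lemma br_g4:
  "br (g4 l m k) (v8 x1 x2 x3 x4 x5 x6 x7 x8) (v8 y1 y2 y3 y4 y5 y6 y7 y8) =
   v8 0 0
      (l * (x1 * y8 - x8 * y1))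
      0
      (- l * (x7 * y8 - x8 * y7) + m * (x2 * y3 - x3 * y2))
      (- l * m * (x2 * y8 - x8 * y2) - m * (x1 * y3 - x3 * y1))
      (- l * m * (x3 * y8 - x8 * y3) + m * (x1 * y2 - x2 * y1))
      0"
  by (rule br_eq_v8[THEN trans])
    (simp add: g4_def, unfold br_def sum_atLeastAtMost_1_8,
     simp add: dif_def g4_def fsum_def wt_def ew_def z2_def algebra_simps)

lemma LC_g4:
  "LC (g4 l m k) = vecs_restrict (\<lambda>X Y.
      v8 0 0
         (- l * X 8 * Y 1)
         (l * m * X 2 * Y 2 + l * m * X 3 * Y 3)
         (l * X 8 * Y 7 + m / 2 * (X 2 * Y 3 - X 3 * Y 2))
         (- l * m * X 2 * Y 8 - m / 2 * (X 1 * Y 3 - X 3 * Y 1))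
         (- l * m * X 3 * Y 8 + m / 2 * (X 1 * Y 2 - X 2 * Y 1))
         0)"
  by (rule LC_eqI, rule is_LC_vecs_restrictI) (simp_all add: ball_vecs br_g4 algebra_simps field_simps)

lemma claim_g4_h4:
  assumes "l \<noteq> 0" "m \<noteq> 0"
  shows "claim (g4 l m k) h4"
  unfolding claim_def
proof (intro conjI)
  show "lie_algebra (g4 l m k)"
    unfolding lie_algebra_def ball_vecs br_g4 by (simp add: g4_def zero_eq_v8 algebra_simps)
  show "lie_algebra h4"
    unfolding lie_algebra_def ball_vecs br_h4 by (simp add: h4_def zero_eq_v8 algebra_simps)
  show "lie_iso (g4 l m k) h4"
    by (rule lie_isoI[where f = "\<lambda>X. v8 (l * X 8) (X 1) (X 2) (X 3) (- X 7 / m) (- X 6 / m) (X 5 / m) (X 4)"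
                        and f' = "\<lambda>Y. v8 (Y 2) (Y 3) (Y 4) (Y 8) (m * Y 7) (- m * Y 6) (- m * Y 5) (Y 1 / l)"])
      (simp_all add: ball_vecs br_g4 br_h4 assms field_simps)
  show "nearly_parakahler (g4 l m k)"
    unfolding nearly_parakahler_def LC_g4 ball_vecs by (simp add: zero_eq_v8 algebra_simps)
  show "tau1_nonzero (g4 l m k)"
    by (rule tau1_nonzeroI[of 1 2 3]) (simp_all add: d2_def br_g4 assms)
  show "ricci_flat (g4 l m k)"
    unfolding ricci_flat_def ricci_def curv_def LC_g4 ball_vecs sum_atLeastAtMost_1_8
    by (simp add: br_g4 algebra_simps)
  show "\<not> flat (g4 l m k)"
    by (rule not_flatI[of "bvec 1" "bvec 8" "bvec 3" _ 4]) (simp_all add: curv_def LC_g4 br_g4 assms)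
qed


lemma br_h5:
  "br h5 (v8 x1 x2 x3 x4 x5 x6 x7 x8) (v8 y1 y2 y3 y4 y5 y6 y7 y8) =
   v8 0 0
      (- (x1 * y2 - x2 * y1))
      0
      (- (x1 * y3 - x3 * y1) - (x2 * y4 - x4 * y2))
      (- (x2 * y3 - x3 * y2))
      (- (x1 * y5 - x5 * y1) + (x2 * y6 - x6 * y2) - (x3 * y4 - x4 * y3))
      0"
  by (rule br_eq_v8[THEN trans])
    (simp add: h5_def, unfold br_def sum_atLeastAtMost_1_8,
     simp add: dif_def h5_def fsum_def wt_def ew_def z2_def algebra_simps)

lemma br_g5:
  "br (g5 l m k) (v8 x1 x2 x3 x4 x5 x6 x7 x8) (v8 y1 y2 y3 y4 y5 y6 y7 y8) =
   v8 0
      (l * (x1 * y8 - x8 * y1))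
      0 0
      (- k * l * (x1 * y8 - x8 * y1) - l * (x6 * y8 - x8 * y6) - m * (x2 * y3 - x3 * y2) + (x1 * y7 - x7 * y1))
      (- l * m * (x2 * y8 - x8 * y2) + m * (x1 * y3 - x3 * y1))
      (- m * (x1 * y2 - x2 * y1))
      0"
  by (rule br_eq_v8[THEN trans])
    (simp add: g5_def, unfold br_def sum_atLeastAtMost_1_8,
     simp add: dif_def g5_def fsum_def wt_def ew_def z2_def algebra_simps)

lemma LC_g5:
  "LC (g5 l m k) = vecs_restrict (\<lambda>X Y.
      v8 0
         (- l * X 8 * Y 1)
         (- X 1 * Y 1)
         (k * l * X 1 * Y 1 + l * m * X 2 * Y 2)
         (- k * l * X 1 * Y 8 + l * X 8 * Y 6 - m / 2 * (X 2 * Y 3 - X 3 * Y 2) + X 1 * Y 7)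
         (- l * m * X 2 * Y 8 + m / 2 * (X 1 * Y 3 - X 3 * Y 1))
         (- m / 2 * (X 1 * Y 2 - X 2 * Y 1))
         0)"
  by (rule LC_eqI, rule is_LC_vecs_restrictI) (simp_all add: ball_vecs br_g5 algebra_simps field_simps)

lemma claim_g5_h5:
  assumes "l \<noteq> 0" "m \<noteq> 0"
  shows "claim (g5 l m k) h5"
  unfolding claim_def
proof (intro conjI)
  show "lie_algebra (g5 l m k)"
    unfolding lie_algebra_def ball_vecs br_g5 by (simp add: g5_def zero_eq_v8 algebra_simps)
  show "lie_algebra h5"
    unfolding lie_algebra_def ball_vecs br_h5 by (simp add: h5_def zero_eq_v8 algebra_simps)
  show "lie_iso (g5 l m k) h5"
    by (rule lie_isoI[where f = "\<lambda>X. v8 (l * X 8) (X 1) (X 2) (X 3) (- X 6 / m) (X 7 / m) ((X 5 + k * X 2) / m) (X 4)"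
                        and f' = "\<lambda>Y. v8 (Y 2) (Y 3) (Y 4) (Y 8) (m * Y 7 - k * Y 3) (- m * Y 5) (m * Y 6) (Y 1 / l)"])
      (simp_all add: ball_vecs br_g5 br_h5 assms field_simps)
  show "nearly_parakahler (g5 l m k)"
    unfolding nearly_parakahler_def LC_g5 ball_vecs by (simp add: zero_eq_v8 algebra_simps)
  show "tau1_nonzero (g5 l m k)"
    by (rule tau1_nonzeroI[of 1 2 3]) (simp_all add: d2_def br_g5 assms)
  show "ricci_flat (g5 l m k)"
    unfolding ricci_flat_def ricci_def curv_def LC_g5 ball_vecs sum_atLeastAtMost_1_8
    by (simp add: br_g5 algebra_simps)
  show "\<not> flat (g5 l m k)"
    by (rule not_flatI[of "bvec 1" "bvec 8" "bvec 2" _ 4]) (simp_all add: curv_def LC_g5 br_g5 assms)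
qed


theorem theorem7p4:
  fixes l m k :: real
  assumes "l \<noteq> 0" and "m \<noteq> 0"
  shows "claim (g1 l m k) h1 \<and> claim (g2 l m k) h2 \<and> claim (g3 l m k) h3 \<and>
         claim (g4 l m k) h4 \<and> claim (g5 l m k) h5"
  using claim_g1_h1[OF assms] claim_g2_h2[OF assms] claim_g3_h3[OF assms]
    claim_g4_h4[OF assms] claim_g5_h5[OF assms]
  by blast

end
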